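(* Let $n\ge1$, $\gamma\in(0,1]$, $\beta=\frac{2}{2-\gamma}$ and $\vartheta>0$. Then there exists $c>0$, depending only on $n,\gamma,\vartheta$, such that for every $\varepsilon>0$, every nonnegative classical solution $u_\varepsilon$ of $\partial_tu_\varepsilon-\Delta u_\varepsilon=-f_\varepsilon(u_\varepsilon)$ in $Q_1$, every $r\in(0,\frac14)$ and every $(x_\circ,t_\circ)\in\{u_\varepsilon\ge\vartheta\varepsilon^\beta\}\cap Q_{1/2}$, $$\sup_{Q_r^-(x_\circ,t_\circ)}u_\varepsilon\ge c(\varepsilon^2+r^2)^{\frac{1}{2-\gamma}}.$$
   Context: $h:\mathbb{R}\to[0,\infty)$ vanishes outside $[0,1]$, is $C^1$ on $[0,1]$, $h(0)=0$, $h'(0)>0$, $\int_0^1h=1$; $H(u)=\int_0^uh$ for $u>0$, $0$ otherwise; $f_\varepsilon(u)=\varepsilon^{-\beta}h(u/\varepsilon^\beta)u^\gamma+\gamma H(u/\varepsilon^\beta)u^{\gamma-1}$ for $u>0$, $f_\varepsilon(u)=0$ for $u\le0$. $Q_r(x,t)=B_r(x)\times(t-r^2,t+r^2)$, $Q_r^-(x,t)=B_r(x)\times(t-r^2,t)$, $Q_r=Q_r(0,0)$. *)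

theory Defs
  imports "HOL-Analysis.Analysis"
begin

definition admissible_h :: "(real \<Rightarrow> real) \<Rightarrow> bool" where
  "admissible_h h \<longleftrightarrow>
     (\<forall>s. h s \<ge> 0) \<and> (\<forall>s. s \<notin> {0..1} \<longrightarrow> h s = 0) \<and>
     (\<exists>h'. (\<forall>s\<in>{0..1}. (h has_real_derivative h' s) (at s within {0..1}))
           \<and> continuous_on {0..1} h' \<and> h' 0 > 0) \<and>
     h 0 = 0 \<and> integral {0..1} h = 1"

definition Hprim :: "(real \<Rightarrow> real) \<Rightarrow> real \<Rightarrow> real" where
  "Hprim h u = (if u > 0 then integral {0..u} h else 0)"

definition f_eps :: "(real \<Rightarrow> real) \<Rightarrow> real \<Rightarrow> real \<Rightarrow> real \<Rightarrow> real \<Rightarrow> real" where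
  "f_eps h \<beta> \<gamma> \<epsilon> u =
     (if u > 0 then \<epsilon> powr (-\<beta>) * h (u / \<epsilon> powr \<beta>) * u powr \<gamma>
                   + \<gamma> * Hprim h (u / \<epsilon> powr \<beta>) * u powr (\<gamma> - 1)
      else 0)"

definition Qcyl :: "real^'n \<Rightarrow> real \<Rightarrow> real \<Rightarrow> ((real^'n) \<times> real) set" where
  "Qcyl x t r = ball x r \<times> {t - r\<^sup>2 <..< t + r\<^sup>2}"

definition Qminus :: "real^'n \<Rightarrow> real \<Rightarrow> real \<Rightarrow> ((real^'n) \<times> real) set" where
  "Qminus x t r = ball x r \<times> {t - r\<^sup>2 <..< t}"

text \<open>Classical (C^{2,1}) solution of  u_t - Laplacian u = F(u)  in an open set \<Omega>:
  ut is the time derivative, g the spatial gradient, Hs the spatial Hessian (as a linear map);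
  all are continuous on \<Omega>, and the Laplacian is the trace of the Hessian.\<close>
definition classical_heat_sol ::
  "(real^'n \<Rightarrow> real \<Rightarrow> real) \<Rightarrow> (real \<Rightarrow> real) \<Rightarrow> ((real^'n) \<times> real) set \<Rightarrow> bool" where
  "classical_heat_sol u F \<Omega> \<longleftrightarrow>
     (\<exists>ut g Hs.
        continuous_on \<Omega> (\<lambda>(x,t). u x t) \<and>
        continuous_on \<Omega> (\<lambda>(x,t). ut x t) \<and>
        continuous_on \<Omega> (\<lambda>(x,t). g x t) \<and>
        (\<forall>i j. continuous_on \<Omega> (\<lambda>(x,t). Hs x t (axis j 1) $ i)) \<and>
        (\<forall>(x,t)\<in>\<Omega>.
           ((\<lambda>s. u x s) has_real_derivative ut x t) (at t) \<and>
           ((\<lambda>y. u y t) has_derivative (\<lambda>v. g x t \<bullet> v)) (at x) \<and>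
           ((\<lambda>y. g y t) has_derivative Hs x t) (at x) \<and>
           ut x t - (\<Sum>i\<in>UNIV. Hs x t (axis i 1) $ i) = F (u x t)))"

end

theory Submission
  imports Defs
begin

text \<open>
  Let M be the supremum of u over the backward cylinder Q_r^-(x0, t0). Since
  u(x0, t0) \<ge> \<theta> \<epsilon>^\<beta>, also M \<ge> \<theta> \<epsilon>^\<beta>, and at every point of the closed cylinder
  where u \<ge> u(x0, t0) the absorption is bounded below: f_\<epsilon>(u) \<ge> \<gamma> H(\<theta>) M^(\<gamma>-1) =: K.
  Subtract the paraboloid l (|x - x0|^2 + 2n (t0 - t)) with l = K / (8n) from u. At a
  maximum of the difference in the parabolic interior the time derivative of u would be
  \<ge> -2nl and its Laplacian \<le> 2nl, so u_t - \<Delta>u \<ge> -K/2, contradicting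
  u_t - \<Delta>u = -f_\<epsilon>(u) \<le> -K. Hence the maximum lies on the parabolic boundary, where the
  paraboloid is at least r^2; this gives M \<ge> K r^2 / (8n), i.e. M^(2-\<gamma>) \<ge> \<gamma> H(\<theta>) r^2 / (8n).
  As \<beta> (2 - \<gamma>) = 2, the first bound reads M^(2-\<gamma>) \<ge> \<theta>^(2-\<gamma>) \<epsilon>^2, and the two bounds
  combine to the claim.
\<close>

lemma admissible_h_integrable:
  assumes "admissible_h h"
  shows "h integrable_on {a..b}"
proof -
  have "continuous_on {0..1} h"
    using assms unfolding admissible_h_def
    by (metis DERIV_continuous continuous_on_eq_continuous_within)
  then have "h integrable_on {0..1}"
    by (rule integrable_continuous_real)
  moreover have "(\<lambda>x. if x \<in> {0..1} then h x else 0) = h"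
    using assms unfolding admissible_h_def by auto
  ultimately have "h integrable_on UNIV"
    by (metis integrable_restrict_UNIV)
  then show ?thesis
    using integrable_on_subinterval by blast
qed

lemma Hprim_mono:
  assumes "admissible_h h" and "0 < a" and "a \<le> b"
  shows "Hprim h a \<le> Hprim h b"
  using assms admissible_h_integrable[OF assms(1)] unfolding Hprim_def admissible_h_def
  by (auto intro!: integral_subset_le)

lemma admissible_h_pos_near_0:
  assumes "admissible_h h"
  obtains \<delta> where "0 < \<delta>" and "\<delta> \<le> 1" and "\<And>y. 0 < y \<Longrightarrow> y < \<delta> \<Longrightarrow> 0 < h y"
proof -
  obtain h' where der: "\<forall>s\<in>{0..1}. (h has_real_derivative h' s) (at s within {0..1})"
    and "h' 0 > 0"
    using assms unfolding admissible_h_def by auto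
  have "h 0 = 0"
    using assms unfolding admissible_h_def by simp
  from der have "((\<lambda>y. (h y - h 0) / (y - 0)) \<longlongrightarrow> h' 0) (at 0 within {0..1})"
    using has_field_derivative_iff[of h "h' 0" 0 "{0..1}"] by auto
  then have "((\<lambda>y. h y / y) \<longlongrightarrow> h' 0) (at 0 within {0..1})"
    using \<open>h 0 = 0\<close> by simp
  then have "\<forall>\<^sub>F y in at 0 within {0..1}. h y / y > 0"
    using \<open>h' 0 > 0\<close> order_tendstoD(1) by blast
  then obtain d where "d > 0" and d: "\<And>y. y \<in> {0..1} \<Longrightarrow> y \<noteq> 0 \<Longrightarrow> dist y 0 < d \<Longrightarrow> h y / y > 0"
    unfolding eventually_at by blast
  show thesis
  proof
    fix y :: real assume "0 < y" "y < min d 1"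
    then show "0 < h y"
      using d[of y] by (simp add: zero_less_divide_iff)
  qed (use \<open>d > 0\<close> in auto)
qed

lemma Hprim_pos:
  assumes "admissible_h h" and "0 < a"
  shows "0 < Hprim h a"
proof -
  obtain \<delta> where "0 < \<delta>" "\<delta> \<le> 1" and pos: "\<And>y. 0 < y \<Longrightarrow> y < \<delta> \<Longrightarrow> 0 < h y"
    using admissible_h_pos_near_0[OF assms(1)] by blast
  define b where "b = min a (\<delta> / 2)"
  have b: "0 < b" "b \<le> a" "b < \<delta>"
    using \<open>0 < a\<close> \<open>0 < \<delta>\<close> by (auto simp: b_def)
  have nonneg: "\<And>s. 0 \<le> h s"
    using assms(1) unfolding admissible_h_def by auto
  have "integral {0..b} h \<noteq> 0"
  proof
    assume "integral {0..b} h = 0"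
    then have "(h has_integral 0) (cbox 0 b)"
      using admissible_h_integrable[OF assms(1)] by (metis box_real(2) has_integral_integral)
    moreover have "continuous_on (cbox 0 b) h"
      using assms(1) b \<open>\<delta> \<le> 1\<close> unfolding admissible_h_def
      by (metis DERIV_continuous atLeastAtMost_iff box_real(2) continuous_on_eq_continuous_within
          continuous_on_subset less_imp_le order.trans subsetI)
    ultimately have "h b = 0"
      using has_integral_0_cbox_imp_0[of 0 b h b] b nonneg by auto
    then show False
      using pos[of b] b by simp
  qed
  moreover have "integral {0..b} h \<ge> 0"
    using nonneg admissible_h_integrable[OF assms(1)] by (simp add: integral_nonneg)
  ultimately have "0 < Hprim h b"
    using b by (simp add: Hprim_def)
  then show ?thesis
    using Hprim_mono[OF assms(1) \<open>0 < b\<close> \<open>b \<le> a\<close>] by simp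
qed

lemma f_eps_lower_bound:
  assumes "admissible_h h" and "0 < \<gamma>" and "\<gamma> \<le> 1" and "0 < \<theta>" and "0 < \<epsilon>"
    and "\<theta> * \<epsilon> powr \<beta> \<le> v" and "v \<le> M"
  shows "\<gamma> * Hprim h \<theta> * M powr (\<gamma> - 1) \<le> f_eps h \<beta> \<gamma> \<epsilon> v"
proof -
  have "0 < \<theta> * \<epsilon> powr \<beta>"
    using \<open>0 < \<theta>\<close> \<open>0 < \<epsilon>\<close> by simp
  then have "0 < v"
    using \<open>\<theta> * \<epsilon> powr \<beta> \<le> v\<close> by linarith
  have "\<theta> \<le> v / \<epsilon> powr \<beta>"
    using \<open>\<theta> * \<epsilon> powr \<beta> \<le> v\<close> \<open>0 < \<epsilon>\<close> by (simp add: pos_le_divide_eq)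
  then have "Hprim h \<theta> \<le> Hprim h (v / \<epsilon> powr \<beta>)"
    using Hprim_mono[OF assms(1) \<open>0 < \<theta>\<close>] by blast
  moreover have "M powr (\<gamma> - 1) \<le> v powr (\<gamma> - 1)"
    using powr_mono2'[of "\<gamma> - 1" v M] \<open>\<gamma> \<le> 1\<close> \<open>0 < v\<close> \<open>v \<le> M\<close> by simp
  moreover have "0 < Hprim h \<theta>"
    using Hprim_pos[OF assms(1) \<open>0 < \<theta>\<close>] .
  ultimately have "\<gamma> * Hprim h \<theta> * M powr (\<gamma> - 1) \<le> \<gamma> * Hprim h (v / \<epsilon> powr \<beta>) * v powr (\<gamma> - 1)"
    using \<open>0 < \<gamma>\<close> by (intro mult_mono mult_left_mono) auto
  moreover have "0 \<le> \<epsilon> powr (-\<beta>) * h (v / \<epsilon> powr \<beta>) * v powr \<gamma>"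
    using assms(1) unfolding admissible_h_def by simp
  ultimately show ?thesis
    unfolding f_eps_def using \<open>0 < v\<close> by simp
qed

lemma deriv_nonneg_at_left_max:
  fixes f :: "real \<Rightarrow> real"
  assumes der: "(f has_real_derivative D) (at t)" and "\<delta> > 0"
    and max: "\<And>s. t - \<delta> < s \<Longrightarrow> s < t \<Longrightarrow> f s \<le> f t"
  shows "D \<ge> 0"
proof (rule ccontr)
  assume "\<not> D \<ge> 0"
  then obtain d where "d > 0" and dec: "\<And>h. 0 < h \<Longrightarrow> h < d \<Longrightarrow> f t < f (t - h)"
    using DERIV_neg_dec_left[OF der] by force
  define h where "h = min d \<delta> / 2"
  have "0 < h" "h < d" "h < \<delta>" using \<open>d > 0\<close> \<open>\<delta> > 0\<close> by (auto simp: h_def)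
  then show False using dec[of h] max[of "t - h"] by force
qed

lemma second_deriv_nonpos_at_local_max:
  fixes \<phi> \<phi>' :: "real \<Rightarrow> real"
  assumes "d > 0"
    and der: "\<And>s. \<bar>s\<bar> < d \<Longrightarrow> (\<phi> has_real_derivative \<phi>' s) (at s)"
    and der2: "(\<phi>' has_real_derivative D) (at 0)"
    and max: "\<And>s. \<bar>s\<bar> < d \<Longrightarrow> \<phi> s \<le> \<phi> 0"
  shows "D \<le> 0"
proof (rule ccontr)
  assume "\<not> D \<le> 0"
  then obtain d' where "d' > 0" and inc: "\<And>h. 0 < h \<Longrightarrow> h < d' \<Longrightarrow> \<phi>' 0 < \<phi>' h"
    using DERIV_pos_inc_right[OF der2] by force
  have "\<phi>' 0 = 0"
    using DERIV_local_max[OF der[of 0] \<open>d > 0\<close>] max \<open>d > 0\<close> by auto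
  define s where "s = min d d' / 2"
  have s: "0 < s" "s < d" "s < d'" using \<open>d > 0\<close> \<open>d' > 0\<close> by (auto simp: s_def)
  obtain z where z: "0 < z" "z < s" "\<phi> s - \<phi> 0 = s * \<phi>' z"
    using MVT2[of 0 s \<phi> \<phi>'] s der by force
  have "\<phi>' z > 0" using inc[of z] z s \<open>\<phi>' 0 = 0\<close> by simp
  then have "\<phi> s - \<phi> 0 > 0" using z \<open>0 < s\<close> by simp
  then show False using max[of s] s by simp
qed

lemma hessian_nonpos_at_local_max:
  fixes v :: "'a::real_inner \<Rightarrow> real"
  assumes "\<delta> > 0"
    and grad: "\<And>y. y \<in> ball x \<delta> \<Longrightarrow> (v has_derivative (\<lambda>h. G y \<bullet> h)) (at y)"
    and hess: "(G has_derivative H) (at x)"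
    and max: "\<And>y. y \<in> ball x \<delta> \<Longrightarrow> v y \<le> v x"
  shows "H e \<bullet> e \<le> 0"
proof -
  define d where "d = \<delta> / (norm e + 1)"
  have "d > 0" using \<open>\<delta> > 0\<close> by (simp add: d_def add_nonneg_pos)
  have on_ball: "x + s *\<^sub>R e \<in> ball x \<delta>" if "\<bar>s\<bar> < d" for s
  proof -
    have "\<bar>s\<bar> * norm e \<le> \<bar>s\<bar> * (norm e + 1)" by (simp add: mult_left_mono)
    also have "\<dots> < \<delta>" using that \<open>\<delta> > 0\<close> by (simp add: d_def pos_less_divide_eq add_nonneg_pos)
    finally show ?thesis by (simp add: dist_norm)
  qed
  have line: "((\<lambda>s. x + s *\<^sub>R e) has_derivative (\<lambda>h. h *\<^sub>R e)) (at s)" for s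
    by (auto intro!: derivative_eq_intros)
  have "((\<lambda>s. v (x + s *\<^sub>R e)) has_real_derivative G (x + s *\<^sub>R e) \<bullet> e) (at s)"
    if "\<bar>s\<bar> < d" for s
    using has_derivative_compose[OF line grad[OF on_ball[OF that]]]
    by (rule has_derivative_imp_has_field_derivative) simp
  moreover have "((\<lambda>s. G (x + s *\<^sub>R e) \<bullet> e) has_real_derivative H e \<bullet> e) (at 0)"
  proof -
    have "linear H" using hess has_derivative_linear by blast
    have "((\<lambda>s. G (x + s *\<^sub>R e)) has_derivative (\<lambda>h. H (h *\<^sub>R e))) (at 0)"
      using has_derivative_compose[OF line, of G H 0] hess by simp
    then show ?thesis
      using \<open>linear H\<close>
      by (auto simp: has_field_derivative_def linear_scale mult.commute
          intro!: derivative_eq_intros)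
  qed
  ultimately show ?thesis
    using second_deriv_nonpos_at_local_max[OF \<open>d > 0\<close>] max on_ball by force
qed

lemma trace_hessian_le_at_max_minus_paraboloid:
  fixes u :: "real^'n \<Rightarrow> real" and g :: "real^'n \<Rightarrow> real^'n" and l :: real
  assumes "\<delta> > 0"
    and grad: "\<And>y. y \<in> ball x \<delta> \<Longrightarrow> (u has_derivative (\<lambda>h. g y \<bullet> h)) (at y)"
    and hess: "(g has_derivative H) (at x)"
    and max: "\<And>y. y \<in> ball x \<delta> \<Longrightarrow>
                u y - l * (norm (y - c))\<^sup>2 \<le> u x - l * (norm (x - c))\<^sup>2"
  shows "(\<Sum>i\<in>UNIV. H (axis i 1) $ i) \<le> 2 * real CARD('n) * l"
proof -
  have "(\<lambda>h. H h - (2 * l) *\<^sub>R h) (axis i 1) \<bullet> axis i 1 \<le> 0" for i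
  proof (rule hessian_nonpos_at_local_max[OF \<open>\<delta> > 0\<close>,
        where v = "\<lambda>y. u y - l * (norm (y - c))\<^sup>2" and G = "\<lambda>y. g y - (2 * l) *\<^sub>R (y - c)"])
    fix y assume "y \<in> ball x \<delta>"
    then show "((\<lambda>y. u y - l * (norm (y - c))\<^sup>2) has_derivative
                 (\<lambda>h. (g y - (2 * l) *\<^sub>R (y - c)) \<bullet> h)) (at y)"
      unfolding power2_norm_eq_inner
      using grad by (auto intro!: derivative_eq_intros simp: inner_commute algebra_simps)
  next
    show "((\<lambda>y. g y - (2 * l) *\<^sub>R (y - c)) has_derivative (\<lambda>h. H h - (2 * l) *\<^sub>R h)) (at x)"
      using hess by (auto intro!: derivative_eq_intros)
  qed (use max in auto)
  then have "H (axis i 1) $ i \<le> 2 * l" for i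
    by (simp add: inner_axis)
  then have "(\<Sum>i\<in>UNIV. H (axis i 1) $ i) \<le> (\<Sum>i\<in>(UNIV::'n set). 2 * l)"
    by (intro sum_mono)
  then show ?thesis by simp
qed

lemma heat_operator_ge_at_parabolic_local_max:
  fixes u :: "real^'n \<Rightarrow> real \<Rightarrow> real" and g :: "real^'n \<Rightarrow> real^'n" and l :: real
  defines "n \<equiv> real CARD('n)"
  assumes "\<delta> > 0"
    and dt: "((\<lambda>s. u x s) has_real_derivative ut) (at t)"
    and grad: "\<And>y. y \<in> ball x \<delta> \<Longrightarrow> ((\<lambda>y. u y t) has_derivative (\<lambda>h. g y \<bullet> h)) (at y)"
    and hess: "(g has_derivative H) (at x)"
    and max: "\<And>y s. y \<in> ball x \<delta> \<Longrightarrow> t - \<delta> < s \<Longrightarrow> s \<le> t \<Longrightarrow>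
                u y s - l * ((norm (y - x0))\<^sup>2 + 2 * n * (t0 - s))
                \<le> u x t - l * ((norm (x - x0))\<^sup>2 + 2 * n * (t0 - t))"
  shows "ut - (\<Sum>i\<in>UNIV. H (axis i 1) $ i) \<ge> - 4 * n * l"
proof -
  have "((\<lambda>s. u x s - l * ((norm (x - x0))\<^sup>2 + 2 * n * (t0 - s))) has_real_derivative ut + 2 * n * l) (at t)"
    using dt by (auto intro!: derivative_eq_intros simp: algebra_simps)
  then have "ut + 2 * n * l \<ge> 0"
    by (rule deriv_nonneg_at_left_max[OF _ \<open>\<delta> > 0\<close>]) (use max \<open>\<delta> > 0\<close> in auto)
  moreover have "(\<Sum>i\<in>UNIV. H (axis i 1) $ i) \<le> 2 * n * l"
  proof -
    have "u y t - l * (norm (y - x0))\<^sup>2 \<le> u x t - l * (norm (x - x0))\<^sup>2" if "y \<in> ball x \<delta>" for y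
      using max[OF that, of t] \<open>\<delta> > 0\<close> by (simp add: algebra_simps)
    with grad hess show ?thesis
      unfolding n_def by (intro trace_hessian_le_at_max_minus_paraboloid[OF \<open>\<delta> > 0\<close>])
  qed
  ultimately show ?thesis by linarith
qed

lemma closure_Qminus:
  assumes "0 < r"
  shows "closure (Qminus x t r) = cball x r \<times> {t - r\<^sup>2..t}"
  using assms by (simp add: Qminus_def closure_Times)

lemma closure_Qminus_subset_Qcyl:
  assumes "(x0, t0) \<in> Qcyl 0 0 (1/2)" and "0 < r" and "r < 1/4"
  shows "closure (Qminus x0 t0 r) \<subseteq> Qcyl 0 0 1"
proof
  fix z assume "z \<in> closure (Qminus x0 t0 r)"
  then have "z \<in> cball x0 r \<times> {t0 - r\<^sup>2..t0}"
    using closure_Qminus[OF \<open>0 < r\<close>] by metis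
  then obtain x t where z: "z = (x, t)" "dist x0 x \<le> r" "t0 - r\<^sup>2 \<le> t" "t \<le> t0"
    by auto
  have x0t0: "norm x0 < 1/2" "-1/4 < t0" "t0 < 1/4"
    using assms(1) by (auto simp: Qcyl_def power2_eq_square)
  have "norm x \<le> norm x0 + dist x0 x"
    by (metis dist_norm norm_minus_commute norm_triangle_sub)
  then have "norm x < 1"
    using z(2) x0t0 \<open>r < 1/4\<close> by linarith
  moreover have "r\<^sup>2 < 1/16"
    using power_strict_mono[of r "1/4" 2] \<open>0 < r\<close> \<open>r < 1/4\<close> by (simp add: power2_eq_square)
  ultimately show "z \<in> Qcyl 0 0 1"
    using z x0t0 by (auto simp: Qcyl_def)
qed

lemma le_SUP_on_compact_closure:
  fixes f :: "'a::metric_space \<Rightarrow> real"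
  assumes "compact (closure S)" and "continuous_on (closure S) f" and "z \<in> closure S"
  shows "f z \<le> (SUP x\<in>S. f x)"
proof (rule continuous_le_on_closure[OF assms(2,3)])
  have "bdd_above (f ` closure S)"
    by (intro bounded_imp_bdd_above compact_imp_bounded compact_continuous_image assms(1,2))
  then have "bdd_above (f ` S)"
    by (meson bdd_above_mono closure_subset image_mono)
  then show "\<And>x. x \<in> S \<Longrightarrow> f x \<le> (SUP x\<in>S. f x)"
    by (simp add: cSUP_upper)
qed

lemma classical_heat_sol_continuous:
  "classical_heat_sol u F \<Omega> \<Longrightarrow> continuous_on \<Omega> (\<lambda>(x, t). u x t)"
  unfolding classical_heat_sol_def by blast

lemma classical_heat_sol_max_minus_paraboloid_on_parabolic_boundary:
  fixes u :: "real^'n \<Rightarrow> real \<Rightarrow> real" and x0 :: "real^'n" and t0 r l :: real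
  defines "n \<equiv> real CARD('n)" and "C \<equiv> cball x0 r \<times> {t0 - r\<^sup>2..t0}"
  assumes sol: "classical_heat_sol u F \<Omega>" and "C \<subseteq> \<Omega>" and "(xs, ts) \<in> C"
    and max: "\<And>y s. (y, s) \<in> C \<Longrightarrow>
                u y s - l * ((norm (y - x0))\<^sup>2 + 2 * n * (t0 - s))
                \<le> u xs ts - l * ((norm (xs - x0))\<^sup>2 + 2 * n * (t0 - ts))"
    and "F (u xs ts) < - 4 * n * l"
  shows "r \<le> norm (xs - x0) \<or> ts \<le> t0 - r\<^sup>2"
proof (rule ccontr)
  assume interior: "\<not> ?thesis"
  define \<delta> where "\<delta> = min (r - norm (xs - x0)) (ts - (t0 - r\<^sup>2))"
  have "0 < \<delta>"
    using interior by (auto simp: \<delta>_def)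
  have box: "(y, s) \<in> C" if "y \<in> ball xs \<delta>" "ts - \<delta> < s" "s \<le> ts" for y s
  proof -
    have "dist x0 y \<le> norm (xs - x0) + dist xs y"
      using norm_triangle_ineq[of "xs - x0" "y - xs"] by (simp add: dist_norm norm_minus_commute)
    moreover have "dist xs y < r - norm (xs - x0)" "t0 - r\<^sup>2 \<le> ts - \<delta>"
      using that(1) by (auto simp: \<delta>_def)
    ultimately show ?thesis
      using that(2,3) \<open>(xs, ts) \<in> C\<close> by (auto simp: C_def)
  qed
  obtain ut g Hs where eqs: "\<forall>(x, t)\<in>\<Omega>.
           ((\<lambda>s. u x s) has_real_derivative ut x t) (at t) \<and>
           ((\<lambda>y. u y t) has_derivative (\<lambda>v. g x t \<bullet> v)) (at x) \<and>
           ((\<lambda>y. g y t) has_derivative Hs x t) (at x) \<and>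
           ut x t - (\<Sum>i\<in>UNIV. Hs x t (axis i 1) $ i) = F (u x t)"
    using sol unfolding classical_heat_sol_def by blast
  have "(xs, ts) \<in> \<Omega>"
    using \<open>(xs, ts) \<in> C\<close> \<open>C \<subseteq> \<Omega>\<close> by blast
  then have dt: "((\<lambda>s. u xs s) has_real_derivative ut xs ts) (at ts)"
    and hess: "((\<lambda>y. g y ts) has_derivative Hs xs ts) (at xs)"
    and eq: "ut xs ts - (\<Sum>i\<in>UNIV. Hs xs ts (axis i 1) $ i) = F (u xs ts)"
    using eqs by auto
  have grad: "((\<lambda>y. u y ts) has_derivative (\<lambda>v. g y ts \<bullet> v)) (at y)" if "y \<in> ball xs \<delta>" for y
  proof -
    have "(y, ts) \<in> \<Omega>"
      using box[OF that] \<open>0 < \<delta>\<close> \<open>C \<subseteq> \<Omega>\<close> by auto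
    then show ?thesis
      using eqs by auto
  qed
  have "- 4 * n * l \<le> F (u xs ts)"
    using heat_operator_ge_at_parabolic_local_max[OF \<open>0 < \<delta>\<close> dt grad hess max[OF box, unfolded n_def]] eq
    by (simp add: n_def)
  then show False
    using \<open>F (u xs ts) < - 4 * n * l\<close> by simp
qed

lemma classical_heat_sol_growth_on_backward_cylinder:
  fixes u :: "real^'n \<Rightarrow> real \<Rightarrow> real" and x0 :: "real^'n" and t0 r K :: real
  defines "C \<equiv> cball x0 r \<times> {t0 - r\<^sup>2..t0}"
  assumes sol: "classical_heat_sol u F \<Omega>" and "C \<subseteq> \<Omega>" and "0 < r" and "0 < K"
    and F_le: "\<And>x t. (x, t) \<in> C \<Longrightarrow> u x0 t0 \<le> u x t \<Longrightarrow> F (u x t) \<le> - K"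
  shows "\<exists>(x, t)\<in>C. u x0 t0 + K * r\<^sup>2 / (8 * CARD('n)) \<le> u x t"
proof -
  define n where "n = real CARD('n)"
  define l where "l = K / (8 * n)"
  have "1 \<le> n" "0 < l"
    using \<open>0 < K\<close> by (auto simp: n_def l_def)
  define W where "W = (\<lambda>(x, t). u x t - l * ((norm (x - x0))\<^sup>2 + 2 * n * (t0 - t)))"
  have "continuous_on C (\<lambda>z. u (fst z) (snd z))"
    using continuous_on_subset[OF classical_heat_sol_continuous[OF sol] \<open>C \<subseteq> \<Omega>\<close>]
    by (simp add: case_prod_unfold)
  then have "continuous_on C W"
    unfolding W_def case_prod_unfold by (intro continuous_intros)
  moreover have "compact C" and "(x0, t0) \<in> C"
    using \<open>0 < r\<close> by (auto simp: C_def compact_Times)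
  ultimately obtain xs ts where "(xs, ts) \<in> C" and W_max: "\<And>z. z \<in> C \<Longrightarrow> W z \<le> W (xs, ts)"
    using continuous_attains_sup[of C W] by fastforce
  have "u x0 t0 \<le> W (xs, ts)"
    using W_max[OF \<open>(x0, t0) \<in> C\<close>] by (simp add: W_def)
  moreover have "W (xs, ts) \<le> u xs ts"
    using \<open>(xs, ts) \<in> C\<close> \<open>0 < l\<close> \<open>1 \<le> n\<close> by (auto simp: W_def C_def)
  ultimately have "F (u xs ts) < - 4 * n * l"
    using F_le[OF \<open>(xs, ts) \<in> C\<close>] \<open>0 < K\<close> \<open>1 \<le> n\<close> by (simp add: l_def)
  then have "r \<le> norm (xs - x0) \<or> ts \<le> t0 - r\<^sup>2"
    using classical_heat_sol_max_minus_paraboloid_on_parabolic_boundary[OF sol \<open>C \<subseteq> \<Omega>\<close>[unfolded C_def]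
        \<open>(xs, ts) \<in> C\<close>[unfolded C_def]] W_max
    by (force simp: W_def C_def n_def)
  then have "r\<^sup>2 \<le> (norm (xs - x0))\<^sup>2 + 2 * n * (t0 - ts)"
  proof
    assume "r \<le> norm (xs - x0)"
    then have "r\<^sup>2 \<le> (norm (xs - x0))\<^sup>2"
      using \<open>0 < r\<close> by (simp add: power_mono)
    moreover have "0 \<le> 2 * n * (t0 - ts)"
      using \<open>1 \<le> n\<close> \<open>(xs, ts) \<in> C\<close> by (simp add: C_def)
    ultimately show ?thesis
      by linarith
  next
    assume "ts \<le> t0 - r\<^sup>2"
    then have "r\<^sup>2 \<le> 2 * n * (t0 - ts)"
      using \<open>1 \<le> n\<close> mult_mono[of 1 "2 * n" "r\<^sup>2" "t0 - ts"] by simp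
    then show ?thesis
      using zero_le_power2[of "norm (xs - x0)"] by linarith
  qed
  then have "l * r\<^sup>2 \<le> l * ((norm (xs - x0))\<^sup>2 + 2 * n * (t0 - ts))"
    using \<open>0 < l\<close> by simp
  then have "u x0 t0 + l * r\<^sup>2 \<le> u xs ts"
    using \<open>u x0 t0 \<le> W (xs, ts)\<close> by (simp add: W_def)
  then show ?thesis
    using \<open>(xs, ts) \<in> C\<close> by (force simp: l_def n_def)
qed

lemma SUP_Qminus_lower_bounds:
  fixes u :: "real^'n \<Rightarrow> real \<Rightarrow> real" and x0 :: "real^'n" and t0 r :: real
  defines "M \<equiv> (SUP (x, t)\<in>Qminus x0 t0 r. u x t)"
  assumes "admissible_h h" and "0 < \<gamma>" and "\<gamma> \<le> 1" and "0 < \<theta>" and "0 < \<epsilon>"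
    and sol: "classical_heat_sol u (\<lambda>v. - f_eps h \<beta> \<gamma> \<epsilon> v) (Qcyl 0 0 1)"
    and "0 < r" and "r < 1/4" and "(x0, t0) \<in> Qcyl 0 0 (1/2)" and "\<theta> * \<epsilon> powr \<beta> \<le> u x0 t0"
  shows "\<theta> * \<epsilon> powr \<beta> \<le> M"
    and "\<gamma> * Hprim h \<theta> / (8 * CARD('n)) * M powr (\<gamma> - 1) * r\<^sup>2 \<le> M"
proof -
  define C where "C = closure (Qminus x0 t0 r)"
  have C: "C = cball x0 r \<times> {t0 - r\<^sup>2..t0}"
    using closure_Qminus[OF \<open>0 < r\<close>] by (simp add: C_def)
  have "C \<subseteq> Qcyl 0 0 1"
    unfolding C_def using closure_Qminus_subset_Qcyl assms by blast
  then have "continuous_on C (\<lambda>(x, t). u x t)"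
    using classical_heat_sol_continuous[OF sol] continuous_on_subset by blast
  moreover have "compact C"
    by (simp add: C compact_Times)
  ultimately have le_M: "u x t \<le> M" if "(x, t) \<in> C" for x t
    using le_SUP_on_compact_closure[of "Qminus x0 t0 r" "\<lambda>(x, t). u x t" "(x, t)"] that
    by (simp add: M_def C_def)
  have "(x0, t0) \<in> C"
    using \<open>0 < r\<close> by (simp add: C)
  then show "\<theta> * \<epsilon> powr \<beta> \<le> M"
    using le_M \<open>\<theta> * \<epsilon> powr \<beta> \<le> u x0 t0\<close> by fastforce
  define K where "K = \<gamma> * Hprim h \<theta> * M powr (\<gamma> - 1)"
  have "0 < u x0 t0"
    using \<open>\<theta> * \<epsilon> powr \<beta> \<le> u x0 t0\<close> \<open>0 < \<theta>\<close> \<open>0 < \<epsilon>\<close> by (smt (verit) mult_pos_pos powr_gt_zero)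
  then have "0 < K"
    using Hprim_pos[OF \<open>admissible_h h\<close> \<open>0 < \<theta>\<close>] \<open>0 < \<gamma>\<close> le_M[OF \<open>(x0, t0) \<in> C\<close>]
    by (simp add: K_def)
  have "- f_eps h \<beta> \<gamma> \<epsilon> (u x t) \<le> - K" if "(x, t) \<in> C" "u x0 t0 \<le> u x t" for x t
    using f_eps_lower_bound[OF assms(2-6)] le_M[OF that(1)] that(2) \<open>\<theta> * \<epsilon> powr \<beta> \<le> u x0 t0\<close>
    by (simp add: K_def)
  then obtain x t where "(x, t) \<in> C" and "u x0 t0 + K * r\<^sup>2 / (8 * CARD('n)) \<le> u x t"
    using classical_heat_sol_growth_on_backward_cylinder[OF sol _ \<open>0 < r\<close> \<open>0 < K\<close>]
      \<open>C \<subseteq> Qcyl 0 0 1\<close> unfolding C by blast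
  with \<open>0 < u x0 t0\<close> show "\<gamma> * Hprim h \<theta> / (8 * CARD('n)) * M powr (\<gamma> - 1) * r\<^sup>2 \<le> M"
    using le_M by (fastforce simp: K_def)
qed

lemma lower_bound_from_eps_and_radius_bounds:
  fixes M a b \<epsilon> r \<gamma> \<beta> :: real
  assumes "\<gamma> < 2" and "\<beta> * (2 - \<gamma>) = 2" and "0 < a" and "0 < b" and "0 < \<epsilon>"
    and eps: "a * \<epsilon> powr \<beta> \<le> M" and radius: "b * M powr (\<gamma> - 1) * r\<^sup>2 \<le> M"
  shows "(min (a powr (2 - \<gamma>)) b / 2) powr (1 / (2 - \<gamma>)) * (\<epsilon>\<^sup>2 + r\<^sup>2) powr (1 / (2 - \<gamma>)) \<le> M"
proof -
  have "0 < M"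
    using eps \<open>0 < a\<close> \<open>0 < \<epsilon>\<close> by (smt (verit) mult_pos_pos powr_gt_zero)
  have "a powr (2 - \<gamma>) * \<epsilon>\<^sup>2 = (a * \<epsilon> powr \<beta>) powr (2 - \<gamma>)"
    using \<open>0 < a\<close> \<open>0 < \<epsilon>\<close> \<open>\<beta> * (2 - \<gamma>) = 2\<close> by (simp add: powr_mult powr_powr)
  also have "\<dots> \<le> M powr (2 - \<gamma>)"
    using eps \<open>0 < a\<close> \<open>0 < \<epsilon>\<close> \<open>\<gamma> < 2\<close> by (intro powr_mono2) auto
  finally have eps': "a powr (2 - \<gamma>) * \<epsilon>\<^sup>2 \<le> M powr (2 - \<gamma>)" .
  have "b * r\<^sup>2 = b * M powr (\<gamma> - 1) * r\<^sup>2 * M powr (1 - \<gamma>)"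
    using \<open>0 < M\<close> by (simp add: powr_add[symmetric])
  also have "\<dots> \<le> M * M powr (1 - \<gamma>)"
    using radius by (simp add: mult_right_mono)
  also have "\<dots> = M powr 1 * M powr (1 - \<gamma>)"
    using \<open>0 < M\<close> by simp
  also have "\<dots> = M powr (1 + (1 - \<gamma>))"
    by (rule powr_add[symmetric])
  finally have radius': "b * r\<^sup>2 \<le> M powr (2 - \<gamma>)"
    by simp
  define c where "c = min (a powr (2 - \<gamma>)) b / 2"
  have "0 \<le> c"
    using \<open>0 < a\<close> \<open>0 < b\<close> by (simp add: c_def)
  have "c * (\<epsilon>\<^sup>2 + r\<^sup>2) \<le> M powr (2 - \<gamma>)"
    using eps' radius' mult_right_mono[OF min.cobounded1[of "a powr (2 - \<gamma>)" b], of "\<epsilon>\<^sup>2"]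
      mult_right_mono[OF min.cobounded2[of "a powr (2 - \<gamma>)" b], of "r\<^sup>2"]
    by (simp add: c_def field_simps)
  then have "(c * (\<epsilon>\<^sup>2 + r\<^sup>2)) powr (1 / (2 - \<gamma>)) \<le> (M powr (2 - \<gamma>)) powr (1 / (2 - \<gamma>))"
    using \<open>0 \<le> c\<close> \<open>\<gamma> < 2\<close> by (intro powr_mono2) auto
  then show ?thesis
    using \<open>0 \<le> c\<close> \<open>0 < M\<close> \<open>\<gamma> < 2\<close> by (simp add: c_def[symmetric] powr_mult powr_powr)
qed

theorem lemma3p6:
  fixes h :: "real \<Rightarrow> real" and \<gamma> \<beta> \<theta> :: real
  assumes "admissible_h h"
    and "0 < \<gamma>" and "\<gamma> \<le> 1"
    and "\<beta> = 2 / (2 - \<gamma>)"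
    and "\<theta> > 0"
  shows "\<exists>c>0. \<forall>(\<epsilon>::real) (u::real^'n \<Rightarrow> real \<Rightarrow> real) (r::real) (x0::real^'n) (t0::real).
           \<epsilon> > 0 \<longrightarrow>
           classical_heat_sol u (\<lambda>v. - f_eps h \<beta> \<gamma> \<epsilon> v) (Qcyl 0 0 1) \<longrightarrow>
           (\<forall>(x,t)\<in>Qcyl 0 0 1. u x t \<ge> 0) \<longrightarrow>
           0 < r \<longrightarrow> r < 1/4 \<longrightarrow>
           (x0, t0) \<in> Qcyl 0 0 (1/2) \<longrightarrow> u x0 t0 \<ge> \<theta> * \<epsilon> powr \<beta> \<longrightarrow>
           (SUP (x,t)\<in>Qminus x0 t0 r. u x t) \<ge> c * (\<epsilon>\<^sup>2 + r\<^sup>2) powr (1 / (2 - \<gamma>))"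
proof -
  define \<kappa> where "\<kappa> = \<gamma> * Hprim h \<theta> / (8 * CARD('n))"
  have "0 < \<kappa>"
    using Hprim_pos[OF assms(1,5)] \<open>0 < \<gamma>\<close> by (simp add: \<kappa>_def)
  have "\<beta> * (2 - \<gamma>) = 2"
    using \<open>\<beta> = 2 / (2 - \<gamma>)\<close> \<open>\<gamma> \<le> 1\<close> by (simp add: field_simps)
  show ?thesis
  proof (intro exI[of _ "(min (\<theta> powr (2 - \<gamma>)) \<kappa> / 2) powr (1 / (2 - \<gamma>))"] conjI allI impI)
    show "0 < (min (\<theta> powr (2 - \<gamma>)) \<kappa> / 2) powr (1 / (2 - \<gamma>))"
      using \<open>0 < \<kappa>\<close> \<open>0 < \<theta>\<close> by (simp add: min_def)
    fix \<epsilon> r t0 :: real and u :: "real^'n \<Rightarrow> real \<Rightarrow> real" and x0 :: "real^'n"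
    assume "0 < \<epsilon>" "classical_heat_sol u (\<lambda>v. - f_eps h \<beta> \<gamma> \<epsilon> v) (Qcyl 0 0 1)"
      "0 < r" "r < 1/4" "(x0, t0) \<in> Qcyl 0 0 (1/2)" "\<theta> * \<epsilon> powr \<beta> \<le> u x0 t0"
    note bounds = SUP_Qminus_lower_bounds[OF assms(1-3,5) this(1-6)]
    show "(min (\<theta> powr (2 - \<gamma>)) \<kappa> / 2) powr (1 / (2 - \<gamma>)) * (\<epsilon>\<^sup>2 + r\<^sup>2) powr (1 / (2 - \<gamma>))
            \<le> (SUP (x, t)\<in>Qminus x0 t0 r. u x t)"
      using lower_bound_from_eps_and_radius_bounds[OF _ \<open>\<beta> * (2 - \<gamma>) = 2\<close> \<open>0 < \<theta>\<close> \<open>0 < \<kappa>\<close>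
          \<open>0 < \<epsilon>\<close> bounds(1)] bounds(2) \<open>\<gamma> \<le> 1\<close>
      by (simp add: \<kappa>_def)
  qed
qed

end
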